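(* Let $F$ be a non-empty union-closed family and $F_c\subseteq F$. Let $S=\bigcup F_c$ and $K=\bigcup F\setminus\bigcup F_c$. Let $w$ be a function from elements to $\mathbb{N}$ with $w(a)>0$ for some $a\in\bigcup F$ and $w(x)=0$ for all $x\in K$. If $\mathrm{fs}(F',w,\bigcup F_c)\ge 0$ for every $F'\in\mathrm{uce}(F_c)$, then $F$ is Frankl's.
   Context: All sets and families are finite. A family $F$ is union closed if $A\cup B\in F$ for all $A,B\in F$; it is union closed for $F_c$ if it is union closed and $A\cup B\in F$ for all $A\in F$, $B\in F_c$. $\mathrm{uce}(F_c)=\{F' : F'\subseteq\mathcal{P}(\bigcup F_c),\ F' \text{ union closed for } F_c\}$. $F$ is Frankl's if there is $a \in \bigcup F$ with $2\cdot|\{A\in F: a\in A\}| \ge |F|$. $\mathrm{sw}(w,A)=\sum_{a\in A}w(a)$; $\mathrm{ss}(A,w,X)=2\,\mathrm{sw}(w,A)-\mathrm{sw}(w,X)\in\mathbb{Z}$; $\mathrm{fs}(F,w,X)=\sum_{A\in F}\mathrm{ss}(A,w,X)$. *)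

theory Defs
  imports Main
begin

definition union_closed :: "'a set set \<Rightarrow> bool" where
  "union_closed F \<longleftrightarrow> (\<forall>A\<in>F. \<forall>B\<in>F. A \<union> B \<in> F)"

definition union_closed_for :: "'a set set \<Rightarrow> 'a set set \<Rightarrow> bool" where
  "union_closed_for F Fc \<longleftrightarrow> union_closed F \<and> (\<forall>A\<in>F. \<forall>B\<in>Fc. A \<union> B \<in> F)"

definition uce :: "'a set set \<Rightarrow> 'a set set set" where
  "uce Fc = {F'. F' \<subseteq> Pow (\<Union>Fc) \<and> union_closed_for F' Fc}"

definition frankls :: "'a set set \<Rightarrow> bool" where
  "frankls F \<longleftrightarrow> (\<exists>a\<in>\<Union>F. 2 * card {A\<in>F. a \<in> A} \<ge> card F)"

definition sw :: "('a \<Rightarrow> nat) \<Rightarrow> 'a set \<Rightarrow> nat" where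
  "sw w A = (\<Sum>a\<in>A. w a)"

definition ss :: "'a set \<Rightarrow> ('a \<Rightarrow> nat) \<Rightarrow> 'a set \<Rightarrow> int" where
  "ss A w X = 2 * int (sw w A) - int (sw w X)"

definition fs :: "'a set set \<Rightarrow> ('a \<Rightarrow> nat) \<Rightarrow> 'a set \<Rightarrow> int" where
  "fs F w X = (\<Sum>A\<in>F. ss A w X)"

end

theory Submission
  imports Defs
begin

text \<open>
  Let S = \<Union>Fc. The proof compares two ways of evaluating the total weighted
  surplus  \<Sum>A\<in>F. ss (A \<inter> S) w S  of the traces of the members of F on S.

  (1) Grouping the members of F by their part outside S, each group traces
  out on S a family that is union closed for Fc, i.e. lies in uce Fc.  The
  hypothesis makes every group contribute a non-negative amount, so the
  total surplus is non-negative.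

  (2) Counting element by element, the total surplus equals
  \<Sum>a\<in>S. w a * (2 * |{A\<in>F. a \<in> A}| - |F|).  As the weights are non-negative
  and not all zero on S, some a \<in> S of positive weight has a non-negative
  coefficient, i.e. lies in at least half of the members of F.
\<close>

lemma ss_Int_as_sum:
  assumes "finite X"
  shows "ss (A \<inter> X) w X = (\<Sum>a\<in>X. int (w a) * (2 * (if a \<in> A then 1 else 0) - 1))"
proof -
  have "sw w (A \<inter> X) = (\<Sum>a\<in>X. if a \<in> A then w a else 0)"
    unfolding sw_def using sum.inter_restrict[OF assms, of w A] by (simp add: Int_commute)
  then have "ss (A \<inter> X) w X = (\<Sum>a\<in>X. 2 * int (if a \<in> A then w a else 0) - int (w a))"
    unfolding ss_def sw_def by (simp add: of_nat_sum sum_distrib_left sum_subtractf)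
  also have "\<dots> = (\<Sum>a\<in>X. int (w a) * (2 * (if a \<in> A then 1 else 0) - 1))"
    by (rule sum.cong) auto
  finally show ?thesis .
qed

lemma total_surplus_double_count:
  assumes "finite F" and "finite X"
  shows "(\<Sum>A\<in>F. ss (A \<inter> X) w X)
       = (\<Sum>a\<in>X. int (w a) * (2 * int (card {A\<in>F. a \<in> A}) - int (card F)))"
proof -
  have "(\<Sum>A\<in>F. ss (A \<inter> X) w X)
      = (\<Sum>a\<in>X. \<Sum>A\<in>F. int (w a) * (2 * (if a \<in> A then 1 else 0) - 1))"
    using ss_Int_as_sum[OF assms(2)] sum.swap by (simp cong: sum.cong)
  also have "\<dots> = (\<Sum>a\<in>X. int (w a) * (2 * int (card {A\<in>F. a \<in> A}) - int (card F)))"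
  proof (rule sum.cong[OF refl])
    fix a
    have count: "(\<Sum>A\<in>F. (if a \<in> A then 1 else 0)::int) = int (card {A\<in>F. a \<in> A})"
      using sum.inter_filter[OF assms(1), of "\<lambda>_. 1::int" "\<lambda>A. a \<in> A"] by simp
    show "(\<Sum>A\<in>F. int (w a) * (2 * (if a \<in> A then 1 else 0) - 1))
        = int (w a) * (2 * int (card {A\<in>F. a \<in> A}) - int (card F))"
      by (simp add: count sum_subtractf sum_distrib_left[symmetric] algebra_simps)
  qed
  finally show ?thesis .
qed

lemma weighted_sum_nonneg_witness:
  fixes c :: "'a \<Rightarrow> int" and w :: "'a \<Rightarrow> nat"
  assumes "finite X" and "(\<Sum>a\<in>X. int (w a) * c a) \<ge> 0"
    and "a0 \<in> X" and "w a0 > 0"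
  shows "\<exists>a\<in>X. w a > 0 \<and> c a \<ge> 0"
proof (rule ccontr)
  assume "\<not> ?thesis"
  then have neg: "c a < 0" if "a \<in> X" "w a > 0" for a
    using that by force
  have "int (w a) * c a \<le> 0" if "a \<in> X" for a
    using neg[OF that] by (cases "w a = 0") (auto intro: mult_nonneg_nonpos)
  then have rest: "(\<Sum>a\<in>X - {a0}. int (w a) * c a) \<le> 0"
    by (intro sum_nonpos) simp
  have "int (w a0) * c a0 < 0"
    using assms(3,4) neg by (simp add: mult_pos_neg)
  then have "(\<Sum>a\<in>X. int (w a) * c a) < 0"
    using rest sum.remove[OF assms(1,3), of "\<lambda>a. int (w a) * c a"] by simp
  with assms(2) show False by simp
qed

definition fibre :: "'a set set \<Rightarrow> 'a set set \<Rightarrow> 'a set \<Rightarrow> 'a set set" where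
  "fibre F Fc B = (\<lambda>A. A \<inter> \<Union>Fc) ` {A\<in>F. A - \<Union>Fc = B}"

text \<open>Every fibre of a union closed family containing Fc is union closed for Fc,
  because adding a set of Fc (or another member of the same fibre) does not
  change the part outside \<Union>Fc.\<close>

lemma fibre_in_uce:
  assumes "union_closed F" and "Fc \<subseteq> F"
  shows "fibre F Fc B \<in> uce Fc"
proof -
  have closed: "A1 \<union> A2 \<in> F" if "A1 \<in> F" "A2 \<in> F" for A1 A2
    using assms(1) that unfolding union_closed_def by blast
  have "union_closed (fibre F Fc B)"
    unfolding union_closed_def
  proof (intro ballI)
    fix X Y assume "X \<in> fibre F Fc B" "Y \<in> fibre F Fc B"
    then obtain A1 A2 where "A1 \<in> F" "A1 - \<Union>Fc = B" "X = A1 \<inter> \<Union>Fc"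
      and "A2 \<in> F" "A2 - \<Union>Fc = B" "Y = A2 \<inter> \<Union>Fc"
      unfolding fibre_def by auto
    then show "X \<union> Y \<in> fibre F Fc B"
      unfolding fibre_def using closed by (auto intro!: image_eqI[where x="A1 \<union> A2"])
  qed
  moreover have "X \<union> C \<in> fibre F Fc B" if X: "X \<in> fibre F Fc B" and C: "C \<in> Fc" for X C
  proof -
    obtain A where "A \<in> F" "A - \<Union>Fc = B" "X = A \<inter> \<Union>Fc"
      using X unfolding fibre_def by auto
    moreover have "A \<union> C \<in> F" using closed \<open>A \<in> F\<close> C assms(2) by blast
    ultimately show ?thesis
      unfolding fibre_def using C by (auto intro!: image_eqI[where x="A \<union> C"])
  qed
  moreover have "fibre F Fc B \<subseteq> Pow (\<Union>Fc)"
    unfolding fibre_def by auto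
  ultimately show ?thesis
    unfolding uce_def union_closed_for_def by blast
qed

text \<open>The total surplus of the traces of F splits into the surpluses of its
  fibres; within one fibre a member is determined by its trace.\<close>

lemma total_surplus_by_fibres:
  assumes "finite F"
  shows "(\<Sum>A\<in>F. ss (A \<inter> \<Union>Fc) w (\<Union>Fc))
       = (\<Sum>B\<in>(\<lambda>A. A - \<Union>Fc) ` F. fs (fibre F Fc B) w (\<Union>Fc))"
proof -
  have "(\<Sum>A\<in>F. ss (A \<inter> \<Union>Fc) w (\<Union>Fc))
      = (\<Sum>B\<in>(\<lambda>A. A - \<Union>Fc) ` F. \<Sum>A\<in>{A\<in>F. A - \<Union>Fc = B}. ss (A \<inter> \<Union>Fc) w (\<Union>Fc))"
    using sum.group[OF assms, of "(\<lambda>A. A - \<Union>Fc) ` F" "\<lambda>A. A - \<Union>Fc"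
        "\<lambda>A. ss (A \<inter> \<Union>Fc) w (\<Union>Fc)"] assms by simp
  also have "\<dots> = (\<Sum>B\<in>(\<lambda>A. A - \<Union>Fc) ` F. fs (fibre F Fc B) w (\<Union>Fc))"
  proof (rule sum.cong[OF refl])
    fix B
    have "inj_on (\<lambda>A. A \<inter> \<Union>Fc) {A\<in>F. A - \<Union>Fc = B}"
      by (rule inj_onI) blast
    then show "(\<Sum>A\<in>{A\<in>F. A - \<Union>Fc = B}. ss (A \<inter> \<Union>Fc) w (\<Union>Fc)) = fs (fibre F Fc B) w (\<Union>Fc)"
      unfolding fs_def fibre_def by (simp add: sum.reindex)
  qed
  finally show ?thesis .
qed

theorem lemma4:
  fixes F Fc :: "'a set set" and w :: "'a \<Rightarrow> nat"
  assumes "finite F" and "\<forall>A\<in>F. finite A"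
    and "F \<noteq> {}" and "union_closed F"
    and "Fc \<subseteq> F"
    and "\<exists>a\<in>\<Union>F. w a > 0"
    and "\<forall>x\<in>\<Union>F - \<Union>Fc. w x = 0"
    and "\<forall>F'\<in>uce Fc. fs F' w (\<Union>Fc) \<ge> 0"
  shows "frankls F"
proof -
  let ?c = "\<lambda>a. 2 * int (card {A\<in>F. a \<in> A}) - int (card F)"
  have fin: "finite (\<Union>Fc)"
    using assms(1,2,5) by (meson finite_Union rev_finite_subset subsetD)
  have "(\<Sum>A\<in>F. ss (A \<inter> \<Union>Fc) w (\<Union>Fc)) \<ge> 0"
    unfolding total_surplus_by_fibres[OF assms(1)]
    using fibre_in_uce[OF assms(4,5)] assms(8) by (simp add: sum_nonneg)
  then have surplus: "(\<Sum>a\<in>\<Union>Fc. int (w a) * ?c a) \<ge> 0"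
    unfolding total_surplus_double_count[OF assms(1) fin] .
  obtain a0 where a0: "a0 \<in> \<Union>F" "w a0 > 0"
    using assms(6) by blast
  with assms(7) have "a0 \<in> \<Union>Fc"
    by (metis DiffI less_numeral_extra(3))
  then obtain a where "a \<in> \<Union>Fc" "?c a \<ge> 0"
    using weighted_sum_nonneg_witness[OF fin surplus _ a0(2)] by blast
  moreover have "a \<in> \<Union>F" using \<open>a \<in> \<Union>Fc\<close> assms(5) by blast
  ultimately show ?thesis
    unfolding frankls_def by (intro bexI[of _ a]) simp_all
qed

end
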